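(* Let $\mathcal{S}$ be a constrained system with a single-state graph presentation as in the context, with edge set $\mathcal{E}$, label length $s$ and pair counts $\alpha_t$. Then $$\mathcal{GV}(\mathcal{S})\triangleq\{(\delta,R_{\rm GV}(\delta)):\delta\in[0,1]\}=\{(\delta(y),\rho(y)):y\in[0,1]\}\cup\{(\delta,0):\delta\ge\delta_{\max}\},$$ where $$\delta_{\max}=\frac{\sum_{t\ge0}t\alpha_t}{s|\mathcal{E}|^2},\qquad \delta(y)=\frac{\sum_{t\ge0}t\alpha_ty^t}{s\sum_{t\ge0}\alpha_ty^t},\qquad \rho(y)=\frac1s\left(\log\frac{|\mathcal{E}|^2}{\sum_{t\ge0}\alpha_ty^t}+\frac{\sum_{t\ge0}t\alpha_ty^t}{\sum_{t\ge0}\alpha_ty^t}\log y\right).$$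
   Context: $\mathcal{G}$ is a labelled graph with exactly one state, a finite set $\mathcal{E}$ of loops (parallel edges) at that state, and an injective labelling $\mathcal{L}:\mathcal{E}\to\{0,1\}^s$ for some $s\ge1$. $\mathcal{S}$ is the set of words obtained by concatenating labels along paths; for $n$ a multiple of $s$, $\mathcal{S}_n$ is the set of such words of length $n$ (labels of paths with $n/s$ edges). $\log$ is to a fixed base (base 2); limits below are over $n$ multiple of $s$. $\mathrm{Cap}(\mathcal{S})=\limsup\frac1n\log|\mathcal{S}_n|$. For $\mathbf{x}\in\mathcal{S}_n$, $V(\mathbf{x},r)=|\{\mathbf{y}\in\mathcal{S}_n:d_H(\mathbf{x},\mathbf{y})\le r\}|$ ($d_H$ = Hamming distance), $T(n,d)=\sum_{\mathbf{x}\in\mathcal{S}_n}V(\mathbf{x},d-1)$, $\widetilde T(\delta)=\limsup\frac1n\log T(n,\lfloor\delta n\rfloor)$, and $R_{\rm GV}(\delta)=2\,\mathrm{Cap}(\mathcal{S})-\widetilde T(\delta)$. For $0\le t\le s$, $\alpha_t=\#\{(e,f)\in\mathcal{E}^2:d_H(\mathcal{L}(e),\mathcal{L}(f))=t\}$. At $y=0$ the term involving $\log 0$ is interpreted as $0$. *)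

theory Defs
  imports "HOL-Analysis.Analysis" "HOL-Library.Liminf_Limsup"
begin

text \<open>Single-state labelled graph: edge set E, labelling L with labels bool lists of length s.
  Words of length k*s are concatenations of labels of k edges.\<close>

definition words :: "('e \<Rightarrow> bool list) \<Rightarrow> 'e set \<Rightarrow> nat \<Rightarrow> bool list set" where
  "words L E k = {concat (map L es) | es. length es = k \<and> set es \<subseteq> E}"

definition hamming :: "bool list \<Rightarrow> bool list \<Rightarrow> nat" where
  "hamming x y = card {i. i < length x \<and> x ! i \<noteq> y ! i}"

definition ball_count :: "('e \<Rightarrow> bool list) \<Rightarrow> 'e set \<Rightarrow> nat \<Rightarrow> bool list \<Rightarrow> nat \<Rightarrow> nat" where
  "ball_count L E k x r = card {y \<in> words L E k. hamming x y \<le> r}"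

text \<open>T(n,d) with n = k*s; d - 1 is truncated subtraction on nat.\<close>
definition Tsum :: "('e \<Rightarrow> bool list) \<Rightarrow> 'e set \<Rightarrow> nat \<Rightarrow> nat \<Rightarrow> nat" where
  "Tsum L E k d = (\<Sum>x\<in>words L E k. ball_count L E k x (d - 1))"

definition cap :: "('e \<Rightarrow> bool list) \<Rightarrow> 'e set \<Rightarrow> nat \<Rightarrow> real" where
  "cap L E s = real_of_ereal
     (limsup (\<lambda>k. ereal (log 2 (real (card (words L E k))) / real (k * s))))"

definition Ttilde :: "('e \<Rightarrow> bool list) \<Rightarrow> 'e set \<Rightarrow> nat \<Rightarrow> real \<Rightarrow> real" where
  "Ttilde L E s \<delta> = real_of_ereal
     (limsup (\<lambda>k. ereal (log 2 (real (Tsum L E k (nat \<lfloor>\<delta> * real (k * s)\<rfloor>))) / real (k * s))))"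

definition R_GV :: "('e \<Rightarrow> bool list) \<Rightarrow> 'e set \<Rightarrow> nat \<Rightarrow> real \<Rightarrow> real" where
  "R_GV L E s \<delta> = 2 * cap L E s - Ttilde L E s \<delta>"

definition alpha :: "('e \<Rightarrow> bool list) \<Rightarrow> 'e set \<Rightarrow> nat \<Rightarrow> nat" where
  "alpha L E t = card {(e, f). e \<in> E \<and> f \<in> E \<and> hamming (L e) (L f) = t}"

definition delta_max :: "('e \<Rightarrow> bool list) \<Rightarrow> 'e set \<Rightarrow> nat \<Rightarrow> real" where
  "delta_max L E s = (\<Sum>t\<le>s. real t * real (alpha L E t)) / (real s * real (card E) ^ 2)"

definition delta_y :: "('e \<Rightarrow> bool list) \<Rightarrow> 'e set \<Rightarrow> nat \<Rightarrow> real \<Rightarrow> real" where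
  "delta_y L E s y = (\<Sum>t\<le>s. real t * real (alpha L E t) * y ^ t)
                     / (real s * (\<Sum>t\<le>s. real (alpha L E t) * y ^ t))"

text \<open>Note: log 2 0 = 0 in Isabelle, matching the convention at y = 0.\<close>
definition rho_y :: "('e \<Rightarrow> bool list) \<Rightarrow> 'e set \<Rightarrow> nat \<Rightarrow> real \<Rightarrow> real" where
  "rho_y L E s y = (1 / real s) *
     (log 2 (real (card E) ^ 2 / (\<Sum>t\<le>s. real (alpha L E t) * y ^ t))
      + ((\<Sum>t\<le>s. real t * real (alpha L E t) * y ^ t) / (\<Sum>t\<le>s. real (alpha L E t) * y ^ t)) * log 2 y)"

end

theory Submission
  imports Defs
begin

(* A pair of words of length k s at Hamming distance at most d - 1 is the same as a list of
   k pairs of edges whose label distances sum to at most d - 1.  Weighting such a list by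
   y ^ (total distance) makes its entries independent, each with the tilted law
   y ^ dist(e, f) / A(y) on E x E, where A(y) = sum_t alpha_t y ^ t and the tilted mean
   distance is mu(y) = s delta(y).  Chernoff's bound caps the number of lists of total
   distance at most mu(y) k by A(y) ^ k / y ^ (mu(y) k), and Chebyshev's inequality for the
   tilted law shows that this is sharp up to a factor 2 ^ o(k).  Hence
   T~(delta(y)) = (log A(y) - mu(y) log y) / s and R_GV(delta(y)) = rho(y).  The map delta is
   continuous with delta(0) = 0 and delta(1) = delta_max, so it covers [0, delta_max]; beyond
   delta_max the count is squeezed between its value at delta_max and the total |E| ^ (2 k),
   whose exponents agree, so R_GV vanishes there. *)

lemma hamming_conv_sum: "hamming x y = (\<Sum>i<length x. of_bool (x ! i \<noteq> y ! i))"
proof -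
  have "{i. i < length x \<and> x ! i \<noteq> y ! i} = {..<length x} \<inter> {i. x ! i \<noteq> y ! i}" by auto
  then show ?thesis unfolding hamming_def by simp
qed

lemma hamming_Cons [simp]:
  "hamming (a # x) (b # y) = of_bool (a \<noteq> b) + hamming x y"
  unfolding hamming_conv_sum length_Cons sum.lessThan_Suc_shift by simp

lemma hamming_Nil [simp]: "hamming [] y = 0"
  by (simp add: hamming_def)

lemma hamming_append:
  "length x = length y \<Longrightarrow> hamming (x @ x') (y @ y') = hamming x y + hamming x' y'"
  by (induction x y rule: list_induct2) simp_all

lemma hamming_le_length: "hamming x y \<le> length x"
  unfolding hamming_def by (rule order_trans[OF card_mono[of "{..<length x}"]]) auto

lemma hamming_eq_0_iff: "length x = length y \<Longrightarrow> hamming x y = 0 \<longleftrightarrow> x = y"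
  by (induction x y rule: list_induct2) simp_all

definition lists_len :: "'a set \<Rightarrow> nat \<Rightarrow> 'a list set" where
  "lists_len A n = {xs. set xs \<subseteq> A \<and> length xs = n}"

lemma lists_len_0 [simp]: "lists_len A 0 = {[]}"
  by (auto simp: lists_len_def)

lemma finite_lists_len: "finite A \<Longrightarrow> finite (lists_len A n)"
  unfolding lists_len_def by (rule finite_lists_length_eq)

lemma card_lists_len: "finite A \<Longrightarrow> card (lists_len A n) = card A ^ n"
  unfolding lists_len_def by (rule card_lists_length_eq)

lemma sum_lists_len_Suc:
  assumes "finite A"
  shows "(\<Sum>xs\<in>lists_len A (Suc n). f xs) = (\<Sum>a\<in>A. \<Sum>xs\<in>lists_len A n. f (a # xs))"
proof -
  have "lists_len A (Suc n) = (\<lambda>(xs, a). a # xs) ` (lists_len A n \<times> A)"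
    unfolding lists_len_def by (rule lists_length_Suc_eq)
  moreover have "inj_on (\<lambda>(xs, a). a # xs) (lists_len A n \<times> A)"
    by (auto simp: inj_on_def)
  ultimately show ?thesis
    by (simp add: sum.reindex sum.cartesian_product' sum.swap[of _ A] case_prod_unfold)
qed

lemma bij_betw_unzip_lists_len:
  "bij_betw (\<lambda>ps. (map fst ps, map snd ps)) (lists_len (A \<times> B) n) (lists_len A n \<times> lists_len B n)"
proof (rule bij_betw_imageI)
  show "inj_on (\<lambda>ps. (map fst ps, map snd ps)) (lists_len (A \<times> B) n)"
    by (rule inj_onI) (metis prod.inject zip_map_fst_snd)
  have "(xs, ys) \<in> (\<lambda>ps. (map fst ps, map snd ps)) ` lists_len (A \<times> B) n"
    if "xs \<in> lists_len A n" "ys \<in> lists_len B n" for xs ys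
    using that by (intro image_eqI[of _ _ "zip xs ys"])
      (auto simp: lists_len_def dest: set_zip_leftD set_zip_rightD)
  moreover have "map fst ps \<in> lists_len A n" "map snd ps \<in> lists_len B n"
    if "ps \<in> lists_len (A \<times> B) n" for ps
    using that by (force simp: lists_len_def)+
  ultimately show "(\<lambda>ps. (map fst ps, map snd ps)) ` lists_len (A \<times> B) n = lists_len A n \<times> lists_len B n"
    by blast
qed

lemma sum_power_lists_len:
  fixes y :: real
  assumes "finite P"
  shows "(\<Sum>xs\<in>lists_len P n. y ^ sum_list (map g xs)) = (\<Sum>p\<in>P. y ^ g p) ^ n"
proof (induction n)
  case (Suc n)
  then show ?case
    by (simp add: sum_lists_len_Suc[OF assms] power_add sum_distrib_left[symmetric]
        sum_distrib_right[symmetric])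
qed simp

(* Under the product weight y ^ sum_list (map g xs) the letters are independent: the cross
   terms vanish and the variances add up. *)
lemma sum_centered_sq_lists_len_le:
  fixes y \<mu> B :: real
  assumes "finite P" and "y \<ge> 0"
    and mean: "(\<Sum>p\<in>P. y ^ g p * (g p - \<mu>)) = 0"
    and var: "(\<Sum>p\<in>P. y ^ g p * (g p - \<mu>)\<^sup>2) \<le> B * (\<Sum>p\<in>P. y ^ g p)"
  shows "(\<Sum>xs\<in>lists_len P n. y ^ sum_list (map g xs) * (real (sum_list (map g xs)) - n * \<mu>)\<^sup>2)
           \<le> n * B * (\<Sum>p\<in>P. y ^ g p) ^ n"
proof (induction n)
  case (Suc n)
  let ?A = "\<Sum>p\<in>P. y ^ g p"
  let ?w = "\<lambda>xs. y ^ sum_list (map g xs)"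
  let ?d = "\<lambda>xs. ?w xs * (real (sum_list (map g xs)) - n * \<mu>)"
  let ?q = "\<lambda>xs. ?w xs * (real (sum_list (map g xs)) - n * \<mu>)\<^sup>2"
  have A0: "0 \<le> ?A" using assms(2) by (simp add: sum_nonneg)
  have "(\<Sum>xs\<in>lists_len P (Suc n). ?w xs * (real (sum_list (map g xs)) - Suc n * \<mu>)\<^sup>2)
      = (\<Sum>a\<in>P. \<Sum>xs\<in>lists_len P n. y ^ g a * (g a - \<mu>)\<^sup>2 * ?w xs
           + 2 * (y ^ g a * (g a - \<mu>)) * ?d xs + y ^ g a * ?q xs)"
    by (simp add: sum_lists_len_Suc[OF assms(1)] power_add algebra_simps power2_eq_square)
  also have "\<dots> = (\<Sum>a\<in>P. y ^ g a * (g a - \<mu>)\<^sup>2 * (\<Sum>xs\<in>lists_len P n. ?w xs)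
      + 2 * (y ^ g a * (g a - \<mu>)) * (\<Sum>xs\<in>lists_len P n. ?d xs)
      + y ^ g a * (\<Sum>xs\<in>lists_len P n. ?q xs))"
    by (simp only: sum.distrib sum_distrib_left)
  also have "\<dots> = (\<Sum>a\<in>P. y ^ g a * (g a - \<mu>)\<^sup>2) * (\<Sum>xs\<in>lists_len P n. ?w xs)
      + (\<Sum>a\<in>P. 2 * (y ^ g a * (g a - \<mu>))) * (\<Sum>xs\<in>lists_len P n. ?d xs)
      + ?A * (\<Sum>xs\<in>lists_len P n. ?q xs)"
    by (simp only: sum.distrib sum_distrib_right)
  also have "\<dots> = (\<Sum>a\<in>P. y ^ g a * (g a - \<mu>)\<^sup>2) * ?A ^ n + ?A * (\<Sum>xs\<in>lists_len P n. ?q xs)"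
    by (simp only: sum_distrib_left[symmetric] mean sum_power_lists_len[OF assms(1)]
        mult_zero_left mult_zero_right add_0_right)
  also have "\<dots> \<le> (B * ?A) * ?A ^ n + ?A * (n * B * ?A ^ n)"
    by (intro add_mono mult_right_mono mult_left_mono var Suc.IH A0 zero_le_power)
  also have "\<dots> = Suc n * B * ?A ^ Suc n"
    by (simp add: algebra_simps)
  finally show ?case .
qed simp

lemma sum_window_lists_len_ge:
  fixes y \<mu> B \<beta> :: real
  assumes P: "finite P" and y: "y \<ge> 0"
    and mean: "(\<Sum>p\<in>P. y ^ g p * (g p - \<mu>)) = 0"
    and var: "(\<Sum>p\<in>P. y ^ g p * (g p - \<mu>)\<^sup>2) \<le> B * (\<Sum>p\<in>P. y ^ g p)"
    and "\<beta> > 0" and "n > 0" and nB: "2 * B \<le> n * \<beta>\<^sup>2"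
  shows "(\<Sum>p\<in>P. y ^ g p) ^ n / 2
           \<le> (\<Sum>xs\<in>{xs\<in>lists_len P n. \<bar>real (sum_list (map g xs)) - n * \<mu>\<bar> \<le> n * \<beta>}.
                 y ^ sum_list (map g xs))"
proof -
  let ?A = "\<Sum>p\<in>P. y ^ g p"
  let ?w = "\<lambda>xs. y ^ sum_list (map g xs)"
  let ?dev = "\<lambda>xs. (real (sum_list (map g xs)) - n * \<mu>)\<^sup>2"
  let ?S = "{xs\<in>lists_len P n. \<bar>real (sum_list (map g xs)) - n * \<mu>\<bar> \<le> n * \<beta>}"
  let ?T = "lists_len P n - ?S"
  define c where "c = (n * \<beta>)\<^sup>2"
  have fin: "finite (lists_len P n)" by (rule finite_lists_len[OF P])
  have c: "c > 0" using assms by (simp add: c_def)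
  have "(\<Sum>xs\<in>?T. ?w xs) \<le> (\<Sum>xs\<in>?T. ?w xs * ?dev xs / c)"
  proof (rule sum_mono)
    fix xs assume "xs \<in> ?T"
    then have "c \<le> ?dev xs"
      unfolding c_def using \<open>\<beta> > 0\<close> by (auto simp: abs_le_square_iff[symmetric])
    then show "?w xs \<le> ?w xs * ?dev xs / c"
      using c mult_left_mono[OF _ zero_le_power[OF y]] by (simp add: le_divide_eq)
  qed
  also have "\<dots> \<le> (\<Sum>xs\<in>lists_len P n. ?w xs * ?dev xs) / c"
    unfolding sum_divide_distrib using y c by (intro sum_mono2 fin) auto
  also have "\<dots> \<le> n * B * ?A ^ n / c"
    using sum_centered_sq_lists_len_le[OF P y mean var] c by (simp add: divide_right_mono)
  also have "\<dots> \<le> ?A ^ n / 2"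
  proof -
    have "n * B * 2 \<le> c"
    proof -
      have "n * (2 * B) \<le> n * (n * \<beta>\<^sup>2)" using nB by (intro mult_left_mono) auto
      then show ?thesis unfolding c_def by (simp add: power2_eq_square algebra_simps)
    qed
    then have "n * B * 2 * ?A ^ n \<le> c * ?A ^ n"
      using y by (intro mult_right_mono) (simp_all add: sum_nonneg)
    then show ?thesis using c by (simp add: field_simps)
  qed
  finally have "(\<Sum>xs\<in>?T. ?w xs) \<le> ?A ^ n / 2" .
  moreover have "(\<Sum>xs\<in>lists_len P n. ?w xs) = (\<Sum>xs\<in>?T. ?w xs) + (\<Sum>xs\<in>?S. ?w xs)"
    by (rule sum.subset_diff) (auto intro: fin)
  ultimately show ?thesis
    using sum_power_lists_len[OF P, of y g n] by linarith
qed

lemma card_window_lists_len_ge: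
  fixes y \<beta> :: real
  assumes P: "finite P" "P \<noteq> {}" and y: "0 < y" "y \<le> 1" and g: "\<forall>p\<in>P. g p \<le> b"
    and "\<beta> > 0" and "n > 0" and nb: "2 * real b ^ 2 \<le> n * \<beta>\<^sup>2"
  defines "\<mu> \<equiv> (\<Sum>p\<in>P. g p * y ^ g p) / (\<Sum>p\<in>P. y ^ g p)"
  shows "(\<Sum>p\<in>P. y ^ g p) ^ n / 2 / y powr (n * (\<mu> - \<beta>))
           \<le> card {xs\<in>lists_len P n. \<bar>real (sum_list (map g xs)) - n * \<mu>\<bar> \<le> n * \<beta>}"
proof -
  let ?A = "\<Sum>p\<in>P. y ^ g p"
  let ?S = "{xs\<in>lists_len P n. \<bar>real (sum_list (map g xs)) - n * \<mu>\<bar> \<le> n * \<beta>}"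
  have A: "?A > 0" using P y by (intro sum_pos) auto
  have "(\<Sum>p\<in>P. y ^ g p * (g p - \<mu>)) = (\<Sum>p\<in>P. g p * y ^ g p) - ?A * \<mu>"
    by (simp add: sum_subtractf sum_distrib_left right_diff_distrib mult.commute)
  then have mean: "(\<Sum>p\<in>P. y ^ g p * (g p - \<mu>)) = 0"
    using A by (simp add: \<mu>_def)
  have "0 \<le> \<mu>" using y by (simp add: \<mu>_def sum_nonneg)
  moreover have "\<mu> \<le> b"
    using A y g by (simp add: \<mu>_def divide_le_eq sum_distrib_left mult.commute sum_mono mult_left_mono)
  ultimately have "\<bar>g p - \<mu>\<bar> \<le> b" if "p \<in> P" for p using g that by force
  then have "y ^ g p * (g p - \<mu>)\<^sup>2 \<le> y ^ g p * b\<^sup>2" if "p \<in> P" for p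
    using y that by (intro mult_left_mono) (auto simp: abs_le_square_iff[symmetric])
  then have var: "(\<Sum>p\<in>P. y ^ g p * (g p - \<mu>)\<^sup>2) \<le> b\<^sup>2 * ?A"
    by (simp add: sum_distrib_left sum_mono mult.commute)
  have "?A ^ n / 2 \<le> (\<Sum>xs\<in>?S. y ^ sum_list (map g xs))"
    using y nb by (intro sum_window_lists_len_ge[OF P(1) _ mean var \<open>\<beta> > 0\<close> \<open>n > 0\<close>]) auto
  also have "\<dots> \<le> (\<Sum>xs\<in>?S. y powr (n * (\<mu> - \<beta>)))"
  proof (rule sum_mono)
    fix xs assume "xs \<in> ?S"
    then have "n * (\<mu> - \<beta>) \<le> sum_list (map g xs)" by (auto simp: algebra_simps)
    then show "y ^ sum_list (map g xs) \<le> y powr (n * (\<mu> - \<beta>))"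
      using y by (simp add: powr_realpow[symmetric] powr_mono')
  qed
  also have "\<dots> = card ?S * y powr (n * (\<mu> - \<beta>))" by simp
  finally show ?thesis using y by (simp add: divide_le_eq)
qed

lemma card_lists_len_sum_le:
  fixes y :: real
  assumes "finite P" and y: "0 < y" "y \<le> 1"
  shows "card {xs\<in>lists_len P n. sum_list (map g xs) \<le> r} \<le> (\<Sum>p\<in>P. y ^ g p) ^ n / y ^ r"
proof -
  let ?S = "{xs\<in>lists_len P n. sum_list (map g xs) \<le> r}"
  have "card ?S = (\<Sum>xs\<in>?S. 1::real)" by simp
  also have "\<dots> \<le> (\<Sum>xs\<in>?S. y ^ sum_list (map g xs) / y ^ r)"
    using y by (intro sum_mono) (simp add: power_decreasing)
  also have "\<dots> \<le> (\<Sum>xs\<in>lists_len P n. y ^ sum_list (map g xs) / y ^ r)"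
    using y by (intro sum_mono2 finite_lists_len assms(1)) auto
  also have "\<dots> = (\<Sum>p\<in>P. y ^ g p) ^ n / y ^ r"
    by (simp add: sum_divide_distrib[symmetric] sum_power_lists_len[OF assms(1)])
  finally show ?thesis .
qed

lemma eventually_le_mult_real_sequentially:
  fixes a b :: real
  assumes "0 < b"
  shows "\<forall>\<^sub>F k in sequentially. a \<le> b * real k"
proof -
  have "\<forall>\<^sub>F k in sequentially. a / b \<le> real k"
    using filterlim_real_sequentially by (simp add: filterlim_at_top)
  then show ?thesis
    by eventually_elim (use assms in \<open>simp add: divide_le_eq mult.commute\<close>)
qed

lemma limsup_eq_of_tendsto:
  fixes X :: "nat \<Rightarrow> real"
  assumes "X \<longlonglongrightarrow> c"
  shows "real_of_ereal (limsup (\<lambda>k. ereal (X k))) = c"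
  using lim_imp_Limsup[OF trivial_limit_sequentially tendsto_ereal[OF assms]] by simp

locale single_state_system =
  fixes E :: "'e set" and L :: "'e \<Rightarrow> bool list" and s :: nat
  assumes finite_E: "finite E" and E_nonempty: "E \<noteq> {}" and s_pos: "1 \<le> s"
    and inj_L: "inj_on L E" and length_L: "\<forall>e\<in>E. length (L e) = s"
begin

definition pair_dist :: "'e \<times> 'e \<Rightarrow> nat" where
  "pair_dist p = hamming (L (fst p)) (L (snd p))"

definition close_pairs :: "nat \<Rightarrow> nat \<Rightarrow> nat" where
  "close_pairs k r = card {ps\<in>lists_len (E \<times> E) k. sum_list (map pair_dist ps) \<le> r}"

lemma concat_map_L_inj:
  assumes "length es = length fs" and "set es \<subseteq> E" "set fs \<subseteq> E"
    and "concat (map L es) = concat (map L fs)"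
  shows "es = fs"
  using assms
proof (induction es fs rule: list_induct2)
  case (Cons e es f fs)
  then have "L e = L f" "concat (map L es) = concat (map L fs)"
    using length_L by (simp_all add: append_eq_append_conv)
  then show ?case using Cons inj_L by (simp add: inj_on_def)
qed simp

lemma bij_betw_concat_map_L: "bij_betw (\<lambda>es. concat (map L es)) (lists_len E k) (words L E k)"
  unfolding bij_betw_def words_def lists_len_def
  by (auto simp: inj_on_def intro: concat_map_L_inj)

lemma card_words: "card (words L E k) = card E ^ k"
  using bij_betw_same_card[OF bij_betw_concat_map_L] by (simp add: card_lists_len finite_E)

lemma hamming_concat_map:
  "set ps \<subseteq> E \<times> E \<Longrightarrow>
   hamming (concat (map (L \<circ> fst) ps)) (concat (map (L \<circ> snd) ps)) = sum_list (map pair_dist ps)"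
  by (induction ps) (auto simp: hamming_append pair_dist_def length_L)

lemma Tsum_eq_close_pairs: "Tsum L E k d = close_pairs k (d - 1)"
proof -
  let ?W = "words L E k"
  let ?c = "\<lambda>es. concat (map L es)"
  let ?F = "map_prod ?c ?c \<circ> (\<lambda>ps. (map fst ps, map snd ps))"
  have "bij_betw ?F (lists_len (E \<times> E) k) (?W \<times> ?W)"
    by (intro bij_betw_trans[OF bij_betw_unzip_lists_len] bij_betw_map_prod bij_betw_concat_map_L)
  then have "bij_betw ?F {ps\<in>lists_len (E \<times> E) k. sum_list (map pair_dist ps) \<le> d - 1}
               {z\<in>?W \<times> ?W. hamming (fst z) (snd z) \<le> d - 1}"
    by (rule bij_betw_Collect) (auto simp: lists_len_def hamming_concat_map)
  moreover have "Tsum L E k d = card (SIGMA x:?W. {y\<in>?W. hamming x y \<le> d - 1})"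
    using bij_betw_finite[OF bij_betw_concat_map_L] finite_lists_len[OF finite_E]
    by (simp add: Tsum_def ball_count_def)
  moreover have "(SIGMA x:?W. {y\<in>?W. hamming x y \<le> d - 1}) = {z\<in>?W \<times> ?W. hamming (fst z) (snd z) \<le> d - 1}"
    by auto
  ultimately show ?thesis
    unfolding close_pairs_def by (simp add: bij_betw_same_card)
qed

lemma pair_dist_le: "p \<in> E \<times> E \<Longrightarrow> pair_dist p \<le> s"
  using hamming_le_length[of "L (fst p)" "L (snd p)"] length_L by (auto simp: pair_dist_def)

lemma pair_dist_eq_0_iff: "p \<in> E \<times> E \<Longrightarrow> pair_dist p = 0 \<longleftrightarrow> fst p = snd p"
  using hamming_eq_0_iff length_L inj_L by (auto simp: pair_dist_def inj_on_def)

lemma card_pair_dist_eq_0: "card {p\<in>E \<times> E. pair_dist p = 0} = card E"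
proof -
  have "{p\<in>E \<times> E. pair_dist p = 0} = (\<lambda>e. (e, e)) ` E"
    using pair_dist_eq_0_iff by auto
  then show ?thesis by (simp add: card_image inj_on_def)
qed

lemma sum_alpha: "(\<Sum>t\<le>s. real (alpha L E t) * f t) = (\<Sum>p\<in>E \<times> E. f (pair_dist p))"
proof -
  have "{(e, f). e \<in> E \<and> f \<in> E \<and> hamming (L e) (L f) = t} = {p\<in>E \<times> E. pair_dist p = t}" for t
    by (auto simp: pair_dist_def)
  then have alpha: "alpha L E t = card {p\<in>E \<times> E. pair_dist p = t}" for t
    by (simp add: alpha_def)
  have "(\<Sum>p\<in>E \<times> E. f (pair_dist p)) = (\<Sum>t\<le>s. \<Sum>p\<in>{p\<in>E \<times> E. pair_dist p = t}. f (pair_dist p))"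
    using finite_E pair_dist_le by (intro sum.group[symmetric]) auto
  also have "\<dots> = (\<Sum>t\<le>s. real (alpha L E t) * f t)"
    unfolding alpha by (intro sum.cong refl) (simp add: sum.cong[of _ _ _ "\<lambda>_. f _"])
  finally show ?thesis ..
qed

(* pair_enum y is the paper's sum_t alpha_t y ^ t and mean_dist y is s delta(y) (see sum_alpha);
   Lambda y / s turns out to be the exponent T~(delta(y)). *)
definition pair_enum :: "real \<Rightarrow> real" where
  "pair_enum y = (\<Sum>p\<in>E \<times> E. y ^ pair_dist p)"

definition mean_dist :: "real \<Rightarrow> real" where
  "mean_dist y = (\<Sum>p\<in>E \<times> E. real (pair_dist p) * y ^ pair_dist p) / pair_enum y"

definition Lambda :: "real \<Rightarrow> real" where
  "Lambda y = log 2 (pair_enum y) - mean_dist y * log 2 y"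

lemma card_E_pos: "0 < card E"
  using finite_E E_nonempty by (simp add: card_gt_0_iff)

lemma pair_enum_ge_card:
  assumes "0 \<le> y"
  shows "card E \<le> pair_enum y"
proof -
  have "card E = (\<Sum>p\<in>{p\<in>E \<times> E. pair_dist p = 0}. y ^ pair_dist p)"
    by (simp add: card_pair_dist_eq_0)
  also have "\<dots> \<le> pair_enum y"
    unfolding pair_enum_def using assms finite_E by (intro sum_mono2) auto
  finally show ?thesis .
qed

lemma pair_enum_pos: "0 \<le> y \<Longrightarrow> 0 < pair_enum y"
  using pair_enum_ge_card card_E_pos by (meson of_nat_0_less_iff order_less_le_trans)

lemma pair_enum_1: "pair_enum 1 = card E ^ 2"
  by (simp add: pair_enum_def card_cartesian_product power2_eq_square)

lemma mean_dist_nonneg: "0 \<le> y \<Longrightarrow> 0 \<le> mean_dist y"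
  unfolding mean_dist_def by (intro divide_nonneg_nonneg sum_nonneg) (auto intro: less_imp_le pair_enum_pos)

lemma mean_dist_le:
  assumes "0 \<le> y"
  shows "mean_dist y \<le> s"
proof -
  have "(\<Sum>p\<in>E \<times> E. real (pair_dist p) * y ^ pair_dist p) \<le> (\<Sum>p\<in>E \<times> E. s * y ^ pair_dist p)"
    using assms pair_dist_le by (intro sum_mono mult_right_mono) auto
  then show ?thesis
    unfolding mean_dist_def using pair_enum_pos[OF assms]
    by (simp add: pos_divide_le_eq pair_enum_def sum_distrib_left)
qed

lemma mean_dist_0: "mean_dist 0 = 0"
  unfolding mean_dist_def by (simp add: power_0_left sum.neutral)

lemma pair_enum_eq_card_if_mean_dist_eq_0:
  assumes "0 \<le> y" and "mean_dist y = 0"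
  shows "pair_enum y = card E"
proof -
  have "(\<Sum>p\<in>E \<times> E. real (pair_dist p) * y ^ pair_dist p) = 0"
    using assms pair_enum_pos[OF assms(1)] by (simp add: mean_dist_def)
  then have "\<forall>p\<in>E \<times> E. real (pair_dist p) * y ^ pair_dist p = 0"
    using finite_E assms(1) by (subst (asm) sum_nonneg_eq_0_iff) auto
  then have "y ^ pair_dist p = of_bool (pair_dist p = 0)" if "p \<in> E \<times> E" for p
    using that by fastforce
  then have "pair_enum y = (\<Sum>p\<in>E \<times> E. of_bool (pair_dist p = 0))"
    unfolding pair_enum_def by (intro sum.cong) auto
  also have "\<dots> = card {p\<in>E \<times> E. pair_dist p = 0}"
    using finite_E by (simp add: Int_def)
  finally show ?thesis by (simp add: card_pair_dist_eq_0)
qed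

lemma Lambda_ge:
  assumes "0 < y" "y \<le> 1" and "\<beta> \<le> mean_dist y"
  shows "- \<beta> * log 2 y \<le> Lambda y"
proof -
  have "1 \<le> pair_enum y"
    using pair_enum_ge_card[of y] card_E_pos assms by linarith
  then have "0 \<le> log 2 (pair_enum y)" by simp
  moreover have "(mean_dist y - \<beta>) * log 2 y \<le> 0"
    using assms by (intro mult_nonneg_nonpos) auto
  ultimately show ?thesis by (simp add: Lambda_def algebra_simps)
qed

lemma delta_y_eq: "delta_y L E s y = mean_dist y / s"
  unfolding delta_y_def mean_dist_def pair_enum_def
  using sum_alpha[of "\<lambda>t. y ^ t"] sum_alpha[of "\<lambda>t. t * y ^ t"]
  by (simp add: mult.assoc mult.left_commute)

lemma rho_y_eq:
  assumes "0 \<le> y"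
  shows "rho_y L E s y = (2 * log 2 (card E) - Lambda y) / s"
  unfolding rho_y_def Lambda_def
  using sum_alpha[of "\<lambda>t. y ^ t"] sum_alpha[of "\<lambda>t. t * y ^ t"] pair_enum_pos[OF assms] card_E_pos
  by (simp add: pair_enum_def[symmetric] mean_dist_def[symmetric] mult.assoc mult.left_commute
      log_divide log_nat_power diff_divide_distrib add_divide_distrib)

lemma delta_max_eq: "delta_max L E s = delta_y L E s 1"
  unfolding delta_max_def delta_y_def using sum_alpha[of "\<lambda>t. 1"] pair_enum_1
  by (simp add: pair_enum_def)

lemma finite_Collect_lists_len_pairs: "finite {ps\<in>lists_len (E \<times> E) k. P ps}"
  using finite_lists_len[of "E \<times> E" k] finite_E by simp

lemma close_pairs_mono: "r \<le> r' \<Longrightarrow> close_pairs k r \<le> close_pairs k r'"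
  unfolding close_pairs_def by (intro card_mono finite_Collect_lists_len_pairs) auto

lemma close_pairs_mono_len:
  assumes "n \<le> k"
  shows "close_pairs n r \<le> close_pairs k r"
proof -
  obtain e where e: "e \<in> E" using E_nonempty by blast
  let ?pad = "\<lambda>ps. replicate (k - n) (e, e) @ ps"
  have "pair_dist (e, e) = 0"
    using pair_dist_eq_0_iff e by simp
  then have "?pad ` {ps\<in>lists_len (E \<times> E) n. sum_list (map pair_dist ps) \<le> r}
      \<subseteq> {ps\<in>lists_len (E \<times> E) k. sum_list (map pair_dist ps) \<le> r}"
    using e assms by (auto simp: lists_len_def sum_list_replicate)
  then show ?thesis
    unfolding close_pairs_def by (intro card_inj_on_le[OF _ _ finite_Collect_lists_len_pairs]) (auto simp: inj_on_def)
qed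

lemma close_pairs_pos: "0 < close_pairs k r"
proof -
  have "{ps\<in>lists_len (E \<times> E) 0. sum_list (map pair_dist ps) \<le> r} = {[]}"
    by auto
  then have "close_pairs 0 r = 1"
    by (simp add: close_pairs_def)
  then show ?thesis
    using close_pairs_mono_len[of 0 k r] by simp
qed

lemma close_pairs_le: "close_pairs k r \<le> card E ^ (2 * k)"
proof -
  have "close_pairs k r \<le> card (lists_len (E \<times> E) k)"
    unfolding close_pairs_def
    using finite_lists_len[OF finite_cartesian_product[OF finite_E finite_E]] by (intro card_mono) auto
  also have "\<dots> = card E ^ (2 * k)"
    using finite_E by (simp add: card_lists_len card_cartesian_product power_mult power2_eq_square)
  finally show ?thesis .
qed

lemma close_pairs_0: "close_pairs k 0 = card E ^ k"
proof -
  have "{ps\<in>lists_len (E \<times> E) k. sum_list (map pair_dist ps) \<le> 0}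
      = lists_len {p\<in>E \<times> E. pair_dist p = 0} k"
    by (auto simp: lists_len_def)
  then show ?thesis
    using finite_E by (simp add: close_pairs_def card_lists_len card_pair_dist_eq_0)
qed

lemma log_close_pairs_le:
  assumes y: "0 < y" "y \<le> 1" and r: "real r \<le> mean_dist y * k"
  shows "log 2 (close_pairs k r) \<le> k * Lambda y"
proof -
  have "close_pairs k r \<le> pair_enum y ^ k / y ^ r"
    unfolding close_pairs_def pair_enum_def
    using finite_E y by (intro card_lists_len_sum_le) auto
  then have "log 2 (close_pairs k r) \<le> log 2 (pair_enum y ^ k / y ^ r)"
    using close_pairs_pos by (intro log_mono) auto
  also have "\<dots> = k * log 2 (pair_enum y) - r * log 2 y"
    using pair_enum_pos[of y] y by (simp add: log_divide log_nat_power)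
  also have "\<dots> \<le> k * log 2 (pair_enum y) - (mean_dist y * k) * log 2 y"
    using mult_right_mono_neg[OF r, of "log 2 y"] y by simp
  also have "\<dots> = k * Lambda y"
    by (simp add: Lambda_def algebra_simps)
  finally show ?thesis .
qed

lemma log_close_pairs_ge:
  fixes n k r :: nat and \<beta> :: real
  assumes y: "0 < y" "y \<le> 1" and "0 < \<beta>" and n: "0 < n" "n \<le> k"
    and var: "2 * real s ^ 2 \<le> n * \<beta>\<^sup>2" and r: "n * (mean_dist y + \<beta>) \<le> r"
  shows "n * (Lambda y + \<beta> * log 2 y) - 1 \<le> log 2 (close_pairs k r)"
proof -
  let ?\<mu> = "mean_dist y"
  let ?S = "{ps\<in>lists_len (E \<times> E) n. \<bar>real (sum_list (map pair_dist ps)) - n * ?\<mu>\<bar> \<le> n * \<beta>}"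
  have "pair_enum y ^ n / 2 / y powr (n * (?\<mu> - \<beta>)) \<le> card ?S"
    unfolding pair_enum_def mean_dist_def
    using finite_E E_nonempty y \<open>0 < \<beta>\<close> n var pair_dist_le
    by (intro card_window_lists_len_ge) auto
  also have "card ?S \<le> close_pairs n r"
    unfolding close_pairs_def using r
    by (intro card_mono finite_Collect_lists_len_pairs) (auto simp: algebra_simps)
  also have "\<dots> \<le> close_pairs k r"
    using n by (intro close_pairs_mono_len)
  finally have bound: "pair_enum y ^ n / 2 / y powr (n * (?\<mu> - \<beta>)) \<le> close_pairs k r"
    by simp
  have A: "0 < pair_enum y"
    using y by (simp add: pair_enum_pos)
  have "log 2 (pair_enum y ^ n / 2 / y powr (n * (?\<mu> - \<beta>)))
      = log 2 (pair_enum y ^ n / 2) - log 2 (y powr (n * (?\<mu> - \<beta>)))"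
    using A y by (subst log_divide) simp
  also have "\<dots> = n * log 2 (pair_enum y) - 1 - n * (?\<mu> - \<beta>) * log 2 y"
    using A y by (simp add: log_divide log_nat_power log_powr)
  also have "\<dots> = n * (Lambda y + \<beta> * log 2 y) - 1"
    by (simp add: Lambda_def algebra_simps)
  finally have "n * (Lambda y + \<beta> * log 2 y) - 1
      = log 2 (pair_enum y ^ n / 2 / y powr (n * (?\<mu> - \<beta>)))" ..
  also have "\<dots> \<le> log 2 (close_pairs k r)"
    using bound A y by (intro log_mono) auto
  finally show ?thesis .
qed

(* Chebyshev's window of n = floor((1 - eps) k) pairs and half-width n beta, with
   beta = eps mean_dist y / 2, lies below mean_dist y k - 2; the other k - n pairs are equal. *)
lemma eventually_log_close_pairs_ge:
  fixes \<epsilon> :: real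
  assumes y: "0 < y" "y \<le> 1" and \<mu>: "0 < mean_dist y" and \<epsilon>: "0 < \<epsilon>" "\<epsilon> < 1"
  defines "D \<equiv> Lambda y + \<epsilon> * mean_dist y / 2 * log 2 y"
  shows "\<forall>\<^sub>F k in sequentially.
           ((1 - \<epsilon>) * k - 1) * D - 1 \<le> log 2 (close_pairs k (nat \<lfloor>mean_dist y * k\<rfloor> - 1))"
proof -
  define \<beta> where "\<beta> = \<epsilon> * mean_dist y / 2"
  have \<beta>: "0 < \<beta>" using \<mu> \<epsilon> by (simp add: \<beta>_def)
  have D: "0 \<le> D"
    using Lambda_ge[OF y, of \<beta>] \<mu> \<epsilon> by (simp add: D_def \<beta>_def)
  have "0 < 1 - \<epsilon>" using \<epsilon> by simp
  show ?thesis
    using eventually_le_mult_real_sequentially[OF \<open>0 < 1 - \<epsilon>\<close>, where a = 2]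
      eventually_le_mult_real_sequentially[OF \<open>0 < 1 - \<epsilon>\<close>, where a = "2 * real s ^ 2 / \<beta>\<^sup>2 + 1"]
      eventually_le_mult_real_sequentially[OF \<beta>, where a = 2]
  proof eventually_elim
    case (elim k)
    define n where "n = nat \<lfloor>(1 - \<epsilon>) * k\<rfloor>"
    have n: "(1 - \<epsilon>) * k - 1 \<le> n" "n \<le> (1 - \<epsilon>) * k"
      using \<epsilon> by (auto simp: n_def)
    have "(1 - \<epsilon>) * k \<le> k"
      using \<epsilon> by (simp add: algebra_simps)
    then have "0 < n" "n \<le> k"
      using n elim by linarith+
    have "2 * real s ^ 2 / \<beta>\<^sup>2 \<le> n"
      using n elim by linarith
    then have "2 * real s ^ 2 \<le> n * \<beta>\<^sup>2"
      using \<beta> by (simp add: divide_le_eq)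
    moreover have "n * (mean_dist y + \<beta>) \<le> nat \<lfloor>mean_dist y * k\<rfloor> - 1"
    proof -
      have "n * (mean_dist y + \<beta>) \<le> (1 - \<epsilon>) * k * (mean_dist y + \<beta>)"
        using n \<mu> \<beta> by (intro mult_right_mono) auto
      also have "\<dots> = k * (mean_dist y - \<beta> - \<epsilon> * \<beta>)"
        by (simp add: \<beta>_def field_simps)
      also have "\<dots> \<le> mean_dist y * k - 2"
        using elim \<epsilon> \<beta> by (simp add: algebra_simps add_increasing2)
      also have "\<dots> \<le> nat \<lfloor>mean_dist y * k\<rfloor> - 1"
        using \<mu> by linarith
      finally show ?thesis .
    qed
    ultimately have "n * D - 1 \<le> log 2 (close_pairs k (nat \<lfloor>mean_dist y * k\<rfloor> - 1))"
      unfolding D_def \<beta>_def[symmetric]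
      using log_close_pairs_ge[OF y \<beta> \<open>0 < n\<close> \<open>n \<le> k\<close>] by simp
    moreover have "((1 - \<epsilon>) * k - 1) * D \<le> n * D"
      using n D by (intro mult_right_mono) auto
    ultimately show ?case by linarith
  qed
qed

lemma eventually_log_close_pairs_gt:
  assumes y: "0 < y" "y \<le> 1" and \<mu>: "0 < mean_dist y" and a: "a < Lambda y / s"
  shows "\<forall>\<^sub>F k in sequentially. a < log 2 (close_pairs k (nat \<lfloor>mean_dist y * k\<rfloor> - 1)) / (k * s)"
proof -
  define h where "h \<epsilon> = (1 - \<epsilon>) * (Lambda y + \<epsilon> * mean_dist y / 2 * log 2 y) / s" for \<epsilon>
  have s: "0 < real s"
    using s_pos by simp
  have "(h \<longlongrightarrow> Lambda y / s) (at_right 0)"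
    unfolding h_def using s by (intro tendsto_eq_intros) auto
  then have "\<forall>\<^sub>F \<epsilon> in at_right 0. a < h \<epsilon>"
    using a by (rule order_tendstoD)
  moreover have "\<forall>\<^sub>F \<epsilon> in at_right 0. 0 < \<epsilon> \<and> \<epsilon> < (1::real)"
    by (auto simp: eventually_at_right_field intro!: exI[of _ 1])
  ultimately have "\<forall>\<^sub>F \<epsilon> in at_right 0. a < h \<epsilon> \<and> 0 < \<epsilon> \<and> \<epsilon> < 1"
    by eventually_elim simp
  then obtain \<epsilon> where "a < h \<epsilon>" and \<epsilon>: "0 < \<epsilon>" "\<epsilon> < 1"
    using eventually_happens' trivial_limit_at_right_real by blast
  define D where "D = Lambda y + \<epsilon> * mean_dist y / 2 * log 2 y"
  let ?g = "\<lambda>k. (((1 - \<epsilon>) * k - 1) * D - 1) / real (k * s)"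
  have "(\<lambda>k. h \<epsilon> - (D + 1) / s * inverse (real k)) \<longlonglongrightarrow> h \<epsilon> - (D + 1) / s * 0"
    by (intro tendsto_intros lim_inverse_n)
  moreover have "\<forall>\<^sub>F k in sequentially. h \<epsilon> - (D + 1) / s * inverse (real k) = ?g k"
    using s by (intro eventually_mono[OF eventually_ge_at_top[of 1]])
      (simp add: h_def D_def field_simps)
  ultimately have "?g \<longlonglongrightarrow> h \<epsilon>"
    by (auto intro: Lim_transform_eventually)
  then have "\<forall>\<^sub>F k in sequentially. a < ?g k"
    using \<open>a < h \<epsilon>\<close> by (rule order_tendstoD)
  then show ?thesis
    using eventually_log_close_pairs_ge[OF y \<mu> \<epsilon>] eventually_ge_at_top[of 1]
  proof eventually_elim
    case (elim k)
    then have "?g k \<le> log 2 (close_pairs k (nat \<lfloor>mean_dist y * k\<rfloor> - 1)) / (k * s)"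
      using s unfolding D_def by (intro divide_right_mono) auto
    then show ?case using elim by linarith
  qed
qed

lemma tendsto_log_close_pairs:
  assumes y: "0 \<le> y" "y \<le> 1"
  shows "(\<lambda>k. log 2 (close_pairs k (nat \<lfloor>mean_dist y * k\<rfloor> - 1)) / (k * s)) \<longlonglongrightarrow> Lambda y / s"
    (is "?f \<longlonglongrightarrow> _")
proof (cases "mean_dist y = 0")
  case True
  then have "Lambda y = log 2 (card E)"
    using pair_enum_eq_card_if_mean_dist_eq_0[OF y(1)] by (simp add: Lambda_def)
  moreover have "?f k = log 2 (card E) / s" if "1 \<le> k" for k
    using True that card_E_pos by (simp add: close_pairs_0 log_nat_power)
  ultimately show ?thesis
    by (intro tendsto_eventually eventually_mono[OF eventually_ge_at_top[of 1]]) simp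
next
  case False
  then have \<mu>: "0 < mean_dist y"
    using mean_dist_nonneg[OF y(1)] by simp
  have "0 < y"
    using False y mean_dist_0 by (cases "y = 0") auto
  have "?f k \<le> Lambda y / s" if "1 \<le> k" for k
  proof -
    have "real (nat \<lfloor>mean_dist y * k\<rfloor> - 1) \<le> nat \<lfloor>mean_dist y * k\<rfloor>"
      by simp
    also have "\<dots> \<le> mean_dist y * k"
      using \<mu> by simp
    finally have "log 2 (close_pairs k (nat \<lfloor>mean_dist y * k\<rfloor> - 1)) \<le> k * Lambda y"
      using \<open>0 < y\<close> y by (intro log_close_pairs_le)
    then show ?thesis
      using that s_pos by (simp add: divide_le_eq mult.commute)
  qed
  then have "\<forall>\<^sub>F k in sequentially. ?f k < a" if "Lambda y / s < a" for a
    using that by (intro eventually_mono[OF eventually_ge_at_top[of 1]]) force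
  then show ?thesis
    using eventually_log_close_pairs_gt[OF \<open>0 < y\<close> y(2) \<mu>] by (intro order_tendstoI)
qed

lemma cap_eq: "cap L E s = log 2 (card E) / s"
proof -
  have "log 2 (card (words L E k)) / real (k * s) = log 2 (card E) / s" if "1 \<le> k" for k
    using that card_E_pos by (simp add: card_words log_nat_power)
  then have "(\<lambda>k. log 2 (card (words L E k)) / real (k * s)) \<longlonglongrightarrow> log 2 (card E) / s"
    by (intro tendsto_eventually eventually_mono[OF eventually_ge_at_top[of 1]]) simp
  then show ?thesis
    unfolding cap_def by (rule limsup_eq_of_tendsto)
qed

lemma R_GV_eq_of_tendsto:
  assumes "(\<lambda>k. log 2 (close_pairs k (nat \<lfloor>\<delta> * real (k * s)\<rfloor> - 1)) / real (k * s)) \<longlonglongrightarrow> c"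
  shows "R_GV L E s \<delta> = 2 * log 2 (card E) / s - c"
  using limsup_eq_of_tendsto[OF assms]
  by (simp add: R_GV_def Ttilde_def Tsum_eq_close_pairs cap_eq)

lemma R_GV_delta_y:
  assumes "0 \<le> y" "y \<le> 1"
  shows "R_GV L E s (delta_y L E s y) = rho_y L E s y"
proof -
  have eq: "\<And>k. mean_dist y * k = delta_y L E s y * real (k * s)"
    using s_pos by (simp add: delta_y_eq)
  have "(\<lambda>k. log 2 (close_pairs k (nat \<lfloor>delta_y L E s y * real (k * s)\<rfloor> - 1)) / real (k * s))
      \<longlonglongrightarrow> Lambda y / s"
    using tendsto_log_close_pairs[OF assms] unfolding eq .
  then show ?thesis
    using rho_y_eq[OF assms(1)] by (simp add: R_GV_eq_of_tendsto diff_divide_distrib)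
qed

lemma R_GV_eq_0:
  assumes "delta_max L E s \<le> \<delta>"
  shows "R_GV L E s \<delta> = 0"
proof -
  let ?c = "2 * log 2 (card E) / s"
  let ?f = "\<lambda>k. log 2 (close_pairs k (nat \<lfloor>\<delta> * real (k * s)\<rfloor> - 1)) / real (k * s)"
  let ?lower = "\<lambda>k. log 2 (close_pairs k (nat \<lfloor>mean_dist 1 * k\<rfloor> - 1)) / real (k * s)"
  have "Lambda 1 = 2 * log 2 (card E)"
    using card_E_pos by (simp add: Lambda_def pair_enum_1 log_nat_power)
  then have lower_lim: "?lower \<longlonglongrightarrow> ?c"
    using tendsto_log_close_pairs[of 1] by simp
  have lower_le: "?lower k \<le> ?f k" for k
  proof -
    have "mean_dist 1 * k = delta_max L E s * real (k * s)"
      using s_pos by (simp add: delta_max_eq delta_y_eq)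
    also have "\<dots> \<le> \<delta> * real (k * s)"
      using assms by (intro mult_right_mono) auto
    finally have "close_pairs k (nat \<lfloor>mean_dist 1 * k\<rfloor> - 1) \<le> close_pairs k (nat \<lfloor>\<delta> * real (k * s)\<rfloor> - 1)"
      by (intro close_pairs_mono diff_le_mono nat_mono floor_mono)
    then have "log 2 (close_pairs k (nat \<lfloor>mean_dist 1 * k\<rfloor> - 1))
        \<le> log 2 (close_pairs k (nat \<lfloor>\<delta> * real (k * s)\<rfloor> - 1))"
      using close_pairs_pos by (intro log_mono) auto
    then show ?thesis
      by (rule divide_right_mono) simp
  qed
  have "?f k \<le> ?c" if "1 \<le> k" for k
  proof -
    have "log 2 (close_pairs k (nat \<lfloor>\<delta> * real (k * s)\<rfloor> - 1)) \<le> log 2 (card E ^ (2 * k))"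
      using close_pairs_pos close_pairs_le by (intro log_mono) auto
    also have "\<dots> = real (k * s) * ?c"
      using card_E_pos s_pos by (simp add: log_nat_power)
    finally show ?thesis
      using that s_pos by (simp add: divide_le_eq mult.commute)
  qed
  then have upper: "\<forall>\<^sub>F k in sequentially. ?f k \<le> ?c"
    by (rule eventually_mono[OF eventually_ge_at_top[of 1]])
  have "?f \<longlonglongrightarrow> ?c"
    using tendsto_sandwich[OF always_eventually[OF allI[OF lower_le]] upper lower_lim tendsto_const] .
  from R_GV_eq_of_tendsto[OF this] show ?thesis
    by simp
qed

lemma delta_y_bounds: "0 \<le> y \<Longrightarrow> 0 \<le> delta_y L E s y \<and> delta_y L E s y \<le> 1"
  using mean_dist_nonneg[of y] mean_dist_le[of y] s_pos by (simp add: delta_y_eq divide_le_eq)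

lemma delta_y_0: "delta_y L E s 0 = 0"
  by (simp add: delta_y_eq mean_dist_0)

lemma continuous_on_delta_y: "continuous_on {0..1} (delta_y L E s)"
proof -
  have "(\<Sum>p\<in>E \<times> E. y ^ pair_dist p) \<noteq> 0" if "y \<in> {0..1}" for y :: real
    using pair_enum_pos[of y] that unfolding pair_enum_def by simp
  then have "continuous_on {0..1} (\<lambda>y. mean_dist y / s)"
    unfolding mean_dist_def pair_enum_def using s_pos by (intro continuous_intros) auto
  then show ?thesis
    by (simp add: delta_y_eq[abs_def])
qed

lemma delta_y_attains:
  assumes "0 \<le> \<delta>" "\<delta> \<le> delta_max L E s"
  obtains y where "0 \<le> y" "y \<le> 1" "delta_y L E s y = \<delta>"
  using IVT'[of "delta_y L E s" 0 \<delta> 1] continuous_on_delta_y assms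
  by (auto simp: delta_y_0 delta_max_eq)

lemma delta_max_nonneg: "0 \<le> delta_max L E s"
  using delta_y_bounds[of 1] by (simp add: delta_max_eq)

lemma R_GV_on_curve_or_eq_0:
  assumes "0 \<le> \<delta>"
  shows "(\<exists>y. 0 \<le> y \<and> y \<le> 1 \<and> \<delta> = delta_y L E s y \<and> R_GV L E s \<delta> = rho_y L E s y)
    \<or> (delta_max L E s \<le> \<delta> \<and> R_GV L E s \<delta> = 0)"
proof (cases "delta_max L E s \<le> \<delta>")
  case False
  then obtain y where "0 \<le> y" "y \<le> 1" "delta_y L E s y = \<delta>"
    using delta_y_attains assms by (metis linear)
  then show ?thesis
    using R_GV_delta_y by auto
qed (simp add: R_GV_eq_0)

end

theorem corollary2:
  fixes E :: "'e set" and L :: "'e \<Rightarrow> bool list" and s :: nat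
  assumes "finite E" and "E \<noteq> {}" and "s \<ge> 1"
    and "inj_on L E" and "\<forall>e\<in>E. length (L e) = s"
  shows "{(\<delta>, R_GV L E s \<delta>) | \<delta>. 0 \<le> \<delta> \<and> \<delta> \<le> 1}
       = {(delta_y L E s y, rho_y L E s y) | y. 0 \<le> y \<and> y \<le> 1}
         \<union> {(\<delta>, 0) | \<delta>. delta_max L E s \<le> \<delta> \<and> \<delta> \<le> 1}"
proof -
  interpret single_state_system E L s
    using assms by unfold_locales
  show ?thesis
  proof (intro equalityI subsetI)
    fix z assume "z \<in> {(\<delta>, R_GV L E s \<delta>) | \<delta>. 0 \<le> \<delta> \<and> \<delta> \<le> 1}"
    then show "z \<in> {(delta_y L E s y, rho_y L E s y) | y. 0 \<le> y \<and> y \<le> 1}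
        \<union> {(\<delta>, 0) | \<delta>. delta_max L E s \<le> \<delta> \<and> \<delta> \<le> 1}"
      using R_GV_on_curve_or_eq_0 by fastforce
  next
    fix z assume "z \<in> {(delta_y L E s y, rho_y L E s y) | y. 0 \<le> y \<and> y \<le> 1}
        \<union> {(\<delta>, 0) | \<delta>. delta_max L E s \<le> \<delta> \<and> \<delta> \<le> 1}"
    then show "z \<in> {(\<delta>, R_GV L E s \<delta>) | \<delta>. 0 \<le> \<delta> \<and> \<delta> \<le> 1}"
      using R_GV_delta_y delta_y_bounds R_GV_eq_0 delta_max_nonneg by fastforce
  qed
qed

end
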